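(* Let $M=(S,\mathrm{Act},P)$ be an MDP, $T\subseteq S$, $\mathrm{opt}\in\{\min,\max\}$, $r$ the least fixed point of $\tilde D^{\mathrm{opt}}$, $Z=\{s\in S\mid\Pr^{\mathrm{opt}}_s(\Diamond T)=0\}$, and $\sigma$ a strategy with $\Pr^\sigma_s(\Diamond T)=\Pr^{\mathrm{opt}}_s(\Diamond T)$ for all $s\in S$. For $s\in S$ let $z(s)$ be the probability, in the Markov chain induced by $\sigma$ started at $s$, of the set of paths $s_0s_1\ldots$ for which there is $i$ with $s_i\in Z$ and $s_j\notin T$ for all $j<i$. Then for all $s\in S$: $z(s)>0$ implies $r(s)<\infty$.
   Context: An MDP is a tuple $M=(S,\mathrm{Act},P)$ with $S$ finite, $\mathrm{Act}$ finite, $P\colon S\times\mathrm{Act}\times S\to[0,1]$ with $\sum_{s'}P(s,a,s')\in\{0,1\}$; $\mathrm{Act}(s)=\{a\mid\sum_{s'}P(s,a,s')=1\}$ is nonempty for all $s$; $\mathrm{Post}(s,a)=\{s'\mid P(s,a,s')>0\}$. A strategy is $\sigma\colon S\to\mathrm{Act}$ with $\sigma(s)\in\mathrm{Act}(s)$, inducing a Markov chain with transitions $P(s,\sigma(s),\cdot)$; $\Pr^\sigma_s(\Diamond T)$ is the probability of visiting $T$ from $s$ and $\Pr^{\mathrm{opt}}_s(\Diamond T)=\mathrm{opt}_\sigma\Pr^\sigma_s(\Diamond T)$. $\mathbb{N}_\infty=\mathbb{N}\cup\{\infty\}$ with $\infty+1=\infty$. $\tilde D^{\mathrm{opt}}(r)(s)=\infty$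 for $s\in T$ and $\mathrm{opt}_{a\in\mathrm{Act}(s)}\big(\min_{s'\in\mathrm{Post}(s,a)}r(s')+[\exists u,v\in\mathrm{Post}(s,a)\colon r(u)\ne r(v)]\big)$ for $s\notin T$ ($[\varphi]\in\{0,1\}$ the Iverson bracket); its least fixed point w.r.t. the pointwise order exists. *)

theory Defs
  imports Complex_Main "HOL-Library.Extended_Nat"
begin

definition Act :: "('s \<Rightarrow> 'a \<Rightarrow> 's \<Rightarrow> real) \<Rightarrow> 's \<Rightarrow> 'a set" where
  "Act P s = {a. (\<Sum>s'\<in>UNIV. P s a s') = 1}"

definition Post :: "('s \<Rightarrow> 'a \<Rightarrow> 's \<Rightarrow> real) \<Rightarrow> 's \<Rightarrow> 'a \<Rightarrow> 's set" where
  "Post P s a = {s'. P s a s' > 0}"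

definition is_mdp :: "('s::finite \<Rightarrow> 'a::finite \<Rightarrow> 's \<Rightarrow> real) \<Rightarrow> bool" where
  "is_mdp P \<longleftrightarrow>
     (\<forall>s a s'. 0 \<le> P s a s' \<and> P s a s' \<le> 1) \<and>
     (\<forall>s a. (\<Sum>s'\<in>UNIV. P s a s') \<in> {0, 1}) \<and>
     (\<forall>s. Act P s \<noteq> {})"

definition is_strategy :: "('s \<Rightarrow> 'a \<Rightarrow> 's \<Rightarrow> real) \<Rightarrow> ('s \<Rightarrow> 'a) \<Rightarrow> bool" where
  "is_strategy P \<sigma> \<longleftrightarrow> (\<forall>s. \<sigma> s \<in> Act P s)"

text \<open>Probability, in the Markov chain induced by strategy \<sigma>, of the paths
  starting in s that reach B within n steps while all earlier states lie in A
  (i.e. there is i \<le> n with s_i \<in> B and s_j \<in> A for all j < i).\<close>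

fun until_bounded ::
  "('s::finite \<Rightarrow> 'a \<Rightarrow> 's \<Rightarrow> real) \<Rightarrow> ('s \<Rightarrow> 'a) \<Rightarrow> 's set \<Rightarrow> 's set \<Rightarrow> nat \<Rightarrow> 's \<Rightarrow> real" where
  "until_bounded P \<sigma> A B 0 s = (if s \<in> B then 1 else 0)"
| "until_bounded P \<sigma> A B (Suc n) s =
     (if s \<in> B then 1 else if s \<notin> A then 0
      else (\<Sum>s'\<in>UNIV. P s (\<sigma> s) s' * until_bounded P \<sigma> A B n s'))"

text \<open>Unbounded version: the probability of the (countable union of the
  increasing) events, i.e. the supremum of the step-bounded probabilities.\<close>

definition until_prob ::
  "('s::finite \<Rightarrow> 'a \<Rightarrow> 's \<Rightarrow> real) \<Rightarrow> ('s \<Rightarrow> 'a) \<Rightarrow> 's set \<Rightarrow> 's set \<Rightarrow> 's \<Rightarrow> real" where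
  "until_prob P \<sigma> A B s = (SUP n. until_bounded P \<sigma> A B n s)"

definition reach_prob ::
  "('s::finite \<Rightarrow> 'a \<Rightarrow> 's \<Rightarrow> real) \<Rightarrow> ('s \<Rightarrow> 'a) \<Rightarrow> 's set \<Rightarrow> 's \<Rightarrow> real" where
  "reach_prob P \<sigma> T s = until_prob P \<sigma> UNIV T s"

datatype optdir = Minimize | Maximize

definition opt_reach_prob ::
  "optdir \<Rightarrow> ('s::finite \<Rightarrow> 'a \<Rightarrow> 's \<Rightarrow> real) \<Rightarrow> 's set \<Rightarrow> 's \<Rightarrow> real" where
  "opt_reach_prob opt P T s =
     (case opt of
        Minimize \<Rightarrow> (INF \<sigma>\<in>{\<sigma>. is_strategy P \<sigma>}. reach_prob P \<sigma> T s)
      | Maximize \<Rightarrow> (SUP \<sigma>\<in>{\<sigma>. is_strategy P \<sigma>}. reach_prob P \<sigma> T s))"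

definition Dtilde ::
  "optdir \<Rightarrow> ('s::finite \<Rightarrow> 'a::finite \<Rightarrow> 's \<Rightarrow> real) \<Rightarrow> 's set \<Rightarrow> ('s \<Rightarrow> enat) \<Rightarrow> ('s \<Rightarrow> enat)" where
  "Dtilde opt P T r s =
     (if s \<in> T then \<infinity>
      else
        let val = (\<lambda>a. Min (r ` Post P s a) +
                      (if \<exists>u\<in>Post P s a. \<exists>v\<in>Post P s a. r u \<noteq> r v then 1 else 0))
        in (case opt of
              Minimize \<Rightarrow> Min (val ` Act P s)
            | Maximize \<Rightarrow> Max (val ` Act P s)))"

end

theory Submission
  imports Defs
begin

(*
  Reaching Z before T and reaching T are disjoint events, and from Z the optimal strategy
  \<sigma> reaches T with probability 0. Hence z(s) > 0 forces Pr^opt_s(\<Diamond>T) = Pr^\<sigma>_s(\<Diamond>T) < 1.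

  Conversely Pr^opt_s(\<Diamond>T) = 1 on Q = {s. r s = \<infinity>}. Let W be the attractor of T within Q:
  the least set containing T and every state of Q from which every action (min) or some
  action (max) stays in Q and enters W with positive probability. If Q - W were nonempty,
  lowering r on Q - W from \<infinity> to a number exceeding all finite values of r would give a
  prefixpoint of Dtilde, contradicting leastness of r. So the attractor levels rank all of Q,
  and a strategy descending along this ranking (\<sigma> itself for min) reaches T almost surely.
*)

lemma mdp_nonneg: "is_mdp P \<Longrightarrow> 0 \<le> P s a s'"
  by (simp add: is_mdp_def)

lemma notin_Post_eq_0: "is_mdp P \<Longrightarrow> s' \<notin> Post P s a \<Longrightarrow> P s a s' = 0"
  by (simp add: Post_def antisym leI mdp_nonneg)

lemma Act_nonempty: "is_mdp P \<Longrightarrow> Act P s \<noteq> {}"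
  by (simp add: is_mdp_def)

lemma Post_nonempty:
  assumes "is_mdp P" and "a \<in> Act P s"
  shows "Post P s a \<noteq> {}"
proof
  assume "Post P s a = {}"
  with assms(1) have "P s a s' = 0" for s' by (simp add: notin_Post_eq_0)
  with assms(2) show False by (simp add: Act_def)
qed

definition action_value ::
  "('s \<Rightarrow> 'a \<Rightarrow> 's \<Rightarrow> real) \<Rightarrow> ('s \<Rightarrow> enat) \<Rightarrow> 's \<Rightarrow> 'a \<Rightarrow> enat" where
  "action_value P r s a =
     Min (r ` Post P s a) + (if \<exists>u\<in>Post P s a. \<exists>v\<in>Post P s a. r u \<noteq> r v then 1 else 0)"

lemma Dtilde_target: "s \<in> T \<Longrightarrow> Dtilde opt P T r s = \<infinity>"
  by (simp add: Dtilde_def)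

lemma Dtilde_not_target:
  "s \<notin> T \<Longrightarrow> Dtilde opt P T r s =
     (case opt of Minimize \<Rightarrow> Min (action_value P r s ` Act P s)
                | Maximize \<Rightarrow> Max (action_value P r s ` Act P s))"
  unfolding Dtilde_def Let_def action_value_def[abs_def] by simp

lemma action_value_mono:
  fixes r r' :: "'s::finite \<Rightarrow> enat"
  assumes "r \<le> r'"
  shows "action_value P r s a \<le> action_value P r' s a"
proof (cases "Post P s a = {}")
  case True
  then show ?thesis by (simp add: action_value_def)
next
  case False
  let ?A = "Post P s a"
  have le: "r x \<le> r' x" for x using assms by (simp add: le_fun_def)
  have min_le: "Min (r ` ?A) \<le> Min (r' ` ?A)"
    using False by simp (intro ballI order_trans[OF Min_le le], auto)
  show ?thesis
  proof (cases "\<exists>u\<in>?A. \<exists>v\<in>?A. r' u \<noteq> r' v")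
    case True
    then show ?thesis using min_le by (simp add: action_value_def add_mono)
  next
    case r'_const: False
    show ?thesis
    proof (cases "\<exists>u\<in>?A. \<exists>v\<in>?A. r u \<noteq> r v")
      case True
      have "Min (r ` ?A) \<in> r ` ?A" by (rule Min_in) (use False in auto)
      then obtain x where x: "x \<in> ?A" "r x = Min (r ` ?A)" by auto
      with True obtain u where u: "u \<in> ?A" "r u \<noteq> Min (r ` ?A)" by metis
      have r'_x: "r' ` ?A = {r' x}" using r'_const x(1) by blast
      have "Min (r ` ?A) < r u" using u by (simp add: order_less_le)
      also have "r u \<le> r' x" using le[of u] r'_x u(1) by (metis imageI singletonD)
      also have "r' x = Min (r' ` ?A)" using r'_x by simp
      finally have "Min (r ` ?A) + 1 \<le> Min (r' ` ?A)"
        by (simp add: eSuc_plus_1[symmetric] ileI1)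
      then show ?thesis
        unfolding action_value_def if_P[OF True] if_not_P[OF r'_const] by simp
    next
      case False
      show ?thesis
        unfolding action_value_def if_not_P[OF False] if_not_P[OF r'_const] using min_le by simp
    qed
  qed
qed

lemma action_value_le:
  fixes u :: "'s::finite \<Rightarrow> enat"
  assumes "Post P s a \<noteq> {}"
    and "(\<forall>x\<in>Post P s a. u x = K) \<or> (\<exists>x\<in>Post P s a. u x + 1 \<le> K)"
  shows "action_value P u s a \<le> K"
  using assms(2)
proof
  assume const: "\<forall>x\<in>Post P s a. u x = K"
  with assms(1) have "u ` Post P s a = {K}" by auto
  with const show ?thesis by (simp add: action_value_def)
next
  assume "\<exists>x\<in>Post P s a. u x + 1 \<le> K"
  then obtain x where x: "x \<in> Post P s a" "u x + 1 \<le> K" by blast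
  have "action_value P u s a \<le> u x + 1"
    unfolding action_value_def by (rule add_mono) (use x(1) in simp_all)
  with x(2) show ?thesis by simp
qed

lemma Dtilde_mono:
  fixes P :: "'s::finite \<Rightarrow> 'a::finite \<Rightarrow> 's \<Rightarrow> real"
  assumes "is_mdp P"
  shows "mono (Dtilde opt P T)"
proof (intro monoI le_funI)
  fix r r' :: "'s \<Rightarrow> enat" and s :: 's
  assume "r \<le> r'"
  then have le: "action_value P r s a \<le> action_value P r' s a" for a
    by (rule action_value_mono)
  have ne: "Act P s \<noteq> {}" using assms by (rule Act_nonempty)
  show "Dtilde opt P T r s \<le> Dtilde opt P T r' s"
  proof (cases "s \<in> T")
    case False
    have "Min (action_value P r s ` Act P s) \<le> Min (action_value P r' s ` Act P s)"
      using ne by simp (intro ballI order_trans[OF Min_le le], auto)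
    moreover have "Max (action_value P r s ` Act P s) \<le> Max (action_value P r' s ` Act P s)"
      using ne by simp (intro ballI order_trans[OF le Max_ge], auto)
    ultimately show ?thesis using False by (cases opt) (simp_all add: Dtilde_not_target)
  qed (simp add: Dtilde_target)
qed

lemma strategy_sum_eq_1: "is_strategy P \<tau> \<Longrightarrow> (\<Sum>s'\<in>UNIV. P s (\<tau> s) s') = 1"
  by (simp add: is_strategy_def Act_def)

lemma until_bounded_nonneg_le_1:
  fixes P :: "'s::finite \<Rightarrow> 'a::finite \<Rightarrow> 's \<Rightarrow> real"
  assumes mdp: "is_mdp P" and strat: "is_strategy P \<tau>"
  shows "0 \<le> until_bounded P \<tau> A B n s \<and> until_bounded P \<tau> A B n s \<le> 1"
proof (induction n arbitrary: s)
  case (Suc n)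
  have "(\<Sum>s'\<in>UNIV. P s (\<tau> s) s' * until_bounded P \<tau> A B n s') \<le> (\<Sum>s'\<in>UNIV. P s (\<tau> s) s')"
    by (rule sum_mono) (use Suc mdp_nonneg[OF mdp] in \<open>simp add: mult_left_le\<close>)
  moreover have "0 \<le> (\<Sum>s'\<in>UNIV. P s (\<tau> s) s' * until_bounded P \<tau> A B n s')"
    by (rule sum_nonneg) (use Suc mdp_nonneg[OF mdp] in simp)
  ultimately show ?case using strategy_sum_eq_1[OF strat] by auto
qed simp

lemma until_bounded_Suc_mono:
  fixes P :: "'s::finite \<Rightarrow> 'a::finite \<Rightarrow> 's \<Rightarrow> real"
  assumes mdp: "is_mdp P" and strat: "is_strategy P \<tau>"
  shows "until_bounded P \<tau> A B n s \<le> until_bounded P \<tau> A B (Suc n) s"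
proof (induction n arbitrary: s)
  case 0
  show ?case using until_bounded_nonneg_le_1[OF assms, of A B "Suc 0" s] by auto
next
  case (Suc n)
  have "(\<Sum>s'\<in>UNIV. P s (\<tau> s) s' * until_bounded P \<tau> A B n s')
     \<le> (\<Sum>s'\<in>UNIV. P s (\<tau> s) s' * until_bounded P \<tau> A B (Suc n) s')"
    by (rule sum_mono) (use Suc mdp_nonneg[OF mdp] in \<open>simp add: mult_left_mono\<close>)
  then show ?case
    by (simp del: until_bounded.simps(2)
        add: until_bounded.simps(2)[of _ _ _ _ n] until_bounded.simps(2)[of _ _ _ _ "Suc n"])
qed

lemma until_bounded_tendsto:
  fixes P :: "'s::finite \<Rightarrow> 'a::finite \<Rightarrow> 's \<Rightarrow> real"
  assumes "is_mdp P" and "is_strategy P \<tau>"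
  shows "(\<lambda>n. until_bounded P \<tau> A B n s) \<longlonglongrightarrow> until_prob P \<tau> A B s"
  unfolding until_prob_def
proof (rule LIMSEQ_incseq_SUP)
  show "bdd_above (range (\<lambda>n. until_bounded P \<tau> A B n s))"
    using until_bounded_nonneg_le_1[OF assms] by (intro bdd_aboveI2[where M=1]) auto
  show "incseq (\<lambda>n. until_bounded P \<tau> A B n s)"
    by (rule incseq_SucI) (rule until_bounded_Suc_mono[OF assms])
qed

lemma until_bounded_le_until_prob:
  fixes P :: "'s::finite \<Rightarrow> 'a::finite \<Rightarrow> 's \<Rightarrow> real"
  assumes "is_mdp P" and "is_strategy P \<tau>"
  shows "until_bounded P \<tau> A B n s \<le> until_prob P \<tau> A B s"
  by (rule incseq_le[OF incseq_SucI until_bounded_tendsto[OF assms]])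
    (rule until_bounded_Suc_mono[OF assms])

lemma until_prob_nonneg_le_1:
  fixes P :: "'s::finite \<Rightarrow> 'a::finite \<Rightarrow> 's \<Rightarrow> real"
  assumes "is_mdp P" and "is_strategy P \<tau>"
  shows "0 \<le> until_prob P \<tau> A B s \<and> until_prob P \<tau> A B s \<le> 1"
  using until_bounded_nonneg_le_1[OF assms] until_bounded_le_until_prob[OF assms, of A B 0 s]
    LIMSEQ_le_const2[OF until_bounded_tendsto[OF assms]]
  by (meson order_trans)

lemma until_prob_target: "s \<in> B \<Longrightarrow> until_prob P \<tau> A B s = 1"
proof -
  assume "s \<in> B"
  then have "until_bounded P \<tau> A B n s = 1" for n by (cases n) simp_all
  then show ?thesis by (simp add: until_prob_def)
qed

lemma until_prob_unfold:
  fixes P :: "'s::finite \<Rightarrow> 'a::finite \<Rightarrow> 's \<Rightarrow> real"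
  assumes "is_mdp P" and "is_strategy P \<tau>" and "s \<in> A" and "s \<notin> B"
  shows "until_prob P \<tau> A B s = (\<Sum>s'\<in>UNIV. P s (\<tau> s) s' * until_prob P \<tau> A B s')"
proof (rule LIMSEQ_unique)
  show "(\<lambda>n. until_bounded P \<tau> A B (Suc n) s) \<longlonglongrightarrow> until_prob P \<tau> A B s"
    by (rule LIMSEQ_Suc) (rule until_bounded_tendsto[OF assms(1,2)])
  have "(\<lambda>n. \<Sum>s'\<in>UNIV. P s (\<tau> s) s' * until_bounded P \<tau> A B n s')
      \<longlonglongrightarrow> (\<Sum>s'\<in>UNIV. P s (\<tau> s) s' * until_prob P \<tau> A B s')"
    by (intro tendsto_intros until_bounded_tendsto[OF assms(1,2)])
  then show "(\<lambda>n. until_bounded P \<tau> A B (Suc n) s)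
      \<longlonglongrightarrow> (\<Sum>s'\<in>UNIV. P s (\<tau> s) s' * until_prob P \<tau> A B s')"
    using assms(3,4) by simp
qed

lemma until_bounded_reach_add_avoid_le_1:
  fixes P :: "'s::finite \<Rightarrow> 'a::finite \<Rightarrow> 's \<Rightarrow> real"
  assumes mdp: "is_mdp P" and strat: "is_strategy P \<tau>"
    and null: "\<And>z n. z \<in> Z \<Longrightarrow> until_bounded P \<tau> UNIV T n z = 0"
  shows "until_bounded P \<tau> UNIV T n s + until_bounded P \<tau> (- T) Z n s \<le> 1"
proof -
  have "Z \<inter> T = {}" using null[of _ 0] by fastforce
  show ?thesis
  proof (induction n arbitrary: s)
    case 0
    show ?case using \<open>Z \<inter> T = {}\<close> by auto
  next
    case (Suc n)
    consider "s \<in> T" | "s \<in> Z" | "s \<notin> T" "s \<notin> Z" by blast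
    then show ?case
    proof cases
      case 1
      then show ?thesis using \<open>Z \<inter> T = {}\<close> by auto
    next
      case 2
      then show ?thesis using null[of s "Suc n"] by simp
    next
      case 3
      have "until_bounded P \<tau> UNIV T (Suc n) s + until_bounded P \<tau> (- T) Z (Suc n) s
          = (\<Sum>s'\<in>UNIV. P s (\<tau> s) s' *
              (until_bounded P \<tau> UNIV T n s' + until_bounded P \<tau> (- T) Z n s'))"
        using 3 by (simp add: sum.distrib distrib_left)
      also have "\<dots> \<le> (\<Sum>s'\<in>UNIV. P s (\<tau> s) s')"
        by (rule sum_mono) (use Suc mdp_nonneg[OF mdp] in \<open>simp add: mult_left_le\<close>)
      finally show ?thesis using strategy_sum_eq_1[OF strat] by simp
    qed
  qed
qed

lemma reach_prob_add_until_prob_le_1: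
  fixes P :: "'s::finite \<Rightarrow> 'a::finite \<Rightarrow> 's \<Rightarrow> real"
  assumes mdp: "is_mdp P" and strat: "is_strategy P \<tau>"
    and null: "\<forall>z\<in>Z. reach_prob P \<tau> T z = 0"
  shows "reach_prob P \<tau> T s + until_prob P \<tau> (- T) Z s \<le> 1"
proof -
  have "until_bounded P \<tau> UNIV T n z = 0" if "z \<in> Z" for n z
    using null that until_bounded_nonneg_le_1[OF mdp strat, of UNIV T n z]
      until_bounded_le_until_prob[OF mdp strat, of UNIV T n z]
    by (simp add: reach_prob_def)
  then have "until_bounded P \<tau> UNIV T n s + until_bounded P \<tau> (- T) Z n s \<le> 1" for n
    by (rule until_bounded_reach_add_avoid_le_1[OF mdp strat])
  then show ?thesis
    unfolding reach_prob_def
    by (intro LIMSEQ_le_const2[OF tendsto_add[OF until_bounded_tendsto until_bounded_tendsto]])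
      (use mdp strat in auto)
qed

lemma reach_prob_eq_1_if_ranked:
  fixes P :: "'s::finite \<Rightarrow> 'a::finite \<Rightarrow> 's \<Rightarrow> real" and rank :: "'s \<Rightarrow> nat"
  assumes mdp: "is_mdp P" and strat: "is_strategy P \<tau>"
    and ranked: "\<And>s. s \<in> Q - T \<Longrightarrow>
      Post P s (\<tau> s) \<subseteq> Q \<and> (\<exists>s'\<in>Post P s (\<tau> s). rank s' < rank s)"
    and "s \<in> Q"
  shows "reach_prob P \<tau> T s = 1"
proof -
  define p where "p = reach_prob P \<tau> T"
  have p_le_1: "p x \<le> 1" for x
    using until_prob_nonneg_le_1[OF mdp strat] by (simp add: p_def reach_prob_def)
  define m where "m = Min (p ` Q)"
  have m_le: "m \<le> p x" if "x \<in> Q" for x using that by (simp add: m_def)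
  have "m \<in> p ` Q" unfolding m_def by (rule Min_in) (use \<open>s \<in> Q\<close> in auto)
  \<comment> \<open>x minimises p on Q and has least rank among the minimisers; the fixpoint equation
    of p makes its lower-ranked successor a minimiser too, unless x \<in> T\<close>
  then obtain x where x: "x \<in> Q" "p x = m"
    and least: "\<And>y. y \<in> Q \<Longrightarrow> p y = m \<Longrightarrow> rank x \<le> rank y"
    using ex_has_least_nat[of "\<lambda>y. y \<in> Q \<and> p y = m" _ rank] by blast
  have "x \<in> T"
  proof (rule ccontr)
    assume "x \<notin> T"
    with ranked x(1) obtain y where post: "Post P x (\<tau> x) \<subseteq> Q"
      and y: "y \<in> Post P x (\<tau> x)" "rank y < rank x" by blast
    have "(\<Sum>z\<in>UNIV. P x (\<tau> x) z * (p z - m)) = p x - m"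
      using until_prob_unfold[OF mdp strat, of x UNIV T] \<open>x \<notin> T\<close> strategy_sum_eq_1[OF strat, of x]
      by (simp add: p_def reach_prob_def right_diff_distrib sum_subtractf sum_distrib_right[symmetric])
    also have "\<dots> = 0" using x(2) by simp
    finally have sum_0: "(\<Sum>z\<in>UNIV. P x (\<tau> x) z * (p z - m)) = 0" .
    have "0 \<le> P x (\<tau> x) z * (p z - m)" for z
    proof (cases "z \<in> Post P x (\<tau> x)")
      case True
      then show ?thesis using post m_le[of z] mdp_nonneg[OF mdp] by auto
    next
      case False
      then have "P x (\<tau> x) z = 0" by (rule notin_Post_eq_0[OF mdp])
      then show ?thesis by simp
    qed
    with sum_0 have "P x (\<tau> x) y * (p y - m) = 0" by (simp add: sum_nonneg_eq_0_iff)
    then have "p y = m" using y(1) by (simp add: Post_def)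
    then show False using least[of y] post y by force
  qed
  then have "m = 1" using x(2) until_prob_target[of x T P \<tau> UNIV] by (simp add: p_def reach_prob_def)
  then show ?thesis using m_le[OF \<open>s \<in> Q\<close>] p_le_1[of s] by (simp add: p_def)
qed

\<comment> \<open>For Minimize every action has to qualify: lfp Dtilde is infinite at s only if every
  action has infinite value there.\<close>
definition attracts ::
  "optdir \<Rightarrow> ('s \<Rightarrow> 'a \<Rightarrow> 's \<Rightarrow> real) \<Rightarrow> 's set \<Rightarrow> 's set \<Rightarrow> 's \<Rightarrow> bool" where
  "attracts opt P Q A s \<longleftrightarrow>
     (case opt of
        Minimize \<Rightarrow> \<forall>a\<in>Act P s. Post P s a \<subseteq> Q \<and> Post P s a \<inter> A \<noteq> {}
      | Maximize \<Rightarrow> \<exists>a\<in>Act P s. Post P s a \<subseteq> Q \<and> Post P s a \<inter> A \<noteq> {})"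

lemma attracts_mono: "A \<subseteq> B \<Longrightarrow> attracts opt P Q A s \<Longrightarrow> attracts opt P Q B s"
  unfolding attracts_def by (cases opt) (simp; blast)+

lemma funpow_inflationary_fixpoint:
  fixes f :: "'a::finite set \<Rightarrow> 'a set"
  assumes "\<And>A. A \<subseteq> f A"
  obtains N where "f ((f ^^ N) A) = (f ^^ N) A"
proof -
  let ?L = "\<lambda>k. (f ^^ k) A"
  have "mono ?L" by (rule mono_iff_le_Suc[THEN iffD2]) (simp add: assms)
  moreover have "finite (range ?L)" by simp
  moreover have "\<forall>n. ?L n = ?L (Suc n) \<longrightarrow> ?L (Suc n) = ?L (Suc (Suc n))" by simp
  ultimately obtain N where "\<forall>n\<ge>N. ?L N = ?L n"
    using finite_mono_remains_stable_implies_strict_prefix by blast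
  from this[rule_format, of "Suc N"] have "?L N = ?L (Suc N)" by simp
  then show thesis using that[of N] by simp
qed

lemma lfp_Dtilde_infinite_subset_closed:
  fixes P :: "'s::finite \<Rightarrow> 'a::finite \<Rightarrow> 's \<Rightarrow> real" and opt T
  defines "Q \<equiv> {s. lfp (Dtilde opt P T) s = \<infinity>}"
  assumes mdp: "is_mdp P" and "T \<subseteq> W"
    and closed: "\<And>s. s \<in> Q \<Longrightarrow> attracts opt P Q W s \<Longrightarrow> s \<in> W"
  shows "Q \<subseteq> W"
proof (rule ccontr)
  define r where "r = lfp (Dtilde opt P T)"
  assume "\<not> Q \<subseteq> W"
  then obtain y where y: "y \<in> Q - W" by blast
  define K where "K = eSuc (Max (insert 0 (r ` (- Q))))"
  have "Max (insert 0 (r ` (- Q))) \<in> insert 0 (r ` (- Q))" by (rule Max_in) auto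
  then have "Max (insert 0 (r ` (- Q))) \<noteq> \<infinity>" by (auto simp: Q_def r_def zero_enat_def)
  then have "K \<noteq> \<infinity>" by (auto simp: K_def eSuc_enat)
  have r_below_K: "r f + 1 \<le> K" if "f \<notin> Q" for f
    using that by (simp add: K_def eSuc_plus_1)
  \<comment> \<open>u is a prefixpoint of Dtilde below r, yet finite on Q - W\<close>
  define u where "u = (\<lambda>s. if s \<in> Q - W then K else r s)"
  have "u \<le> r" by (auto simp: le_fun_def u_def Q_def r_def)
  have value_le_K: "action_value P u s a \<le> K"
    if "a \<in> Act P s" and "\<not> (Post P s a \<subseteq> Q \<and> Post P s a \<inter> W \<noteq> {})" for s a
  proof (rule action_value_le[OF Post_nonempty[OF mdp that(1)]])
    show "(\<forall>x\<in>Post P s a. u x = K) \<or> (\<exists>x\<in>Post P s a. u x + 1 \<le> K)"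
    proof (cases "Post P s a \<subseteq> Q")
      case True
      with that(2) show ?thesis by (auto simp: u_def)
    next
      case False
      then show ?thesis using r_below_K by (auto simp: u_def)
    qed
  qed
  have "Dtilde opt P T u \<le> u"
  proof (rule le_funI)
    fix s
    show "Dtilde opt P T u s \<le> u s"
    proof (cases "s \<in> Q - W")
      case True
      then have "s \<notin> T" "\<not> attracts opt P Q W s" using \<open>T \<subseteq> W\<close> closed by auto
      moreover have "Act P s \<noteq> {}" by (rule Act_nonempty[OF mdp])
      ultimately show ?thesis using True value_le_K
        by (cases opt) (auto simp: Dtilde_not_target attracts_def u_def Min_le_iff)
    next
      case False
      have "Dtilde opt P T u s \<le> Dtilde opt P T r s"
        using monoD[OF Dtilde_mono[OF mdp] \<open>u \<le> r\<close>] by (simp add: le_fun_def)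
      also have "\<dots> = r s"
        unfolding r_def by (subst lfp_unfold[OF Dtilde_mono[OF mdp]]) simp
      also have "\<dots> = u s" using False by (auto simp: u_def)
      finally show ?thesis .
    qed
  qed
  then have "r \<le> u" unfolding r_def by (rule lfp_lowerbound)
  then have "r y \<le> K" using y by (auto simp: le_fun_def u_def split: if_splits)
  with y \<open>K \<noteq> \<infinity>\<close> show False by (simp add: Q_def r_def)
qed

lemma lfp_Dtilde_infinite_ranking:
  fixes P :: "'s::finite \<Rightarrow> 'a::finite \<Rightarrow> 's \<Rightarrow> real" and opt T
  defines "Q \<equiv> {s. lfp (Dtilde opt P T) s = \<infinity>}"
  assumes mdp: "is_mdp P"
  obtains rank :: "'s \<Rightarrow> nat"
  where "\<And>s. s \<in> Q - T \<Longrightarrow> attracts opt P Q {s'. rank s' < rank s} s"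
proof -
  define step where "step A = A \<union> {s\<in>Q. attracts opt P Q A s}" for A
  define L where "L k = (step ^^ k) T" for k
  obtain N where fixpoint: "step (L N) = L N"
    using funpow_inflationary_fixpoint[of step] unfolding L_def step_def by blast
  have "T \<subseteq> L N" unfolding L_def by (induction N) (auto simp: step_def)
  then have Q_sub: "Q \<subseteq> L N"
    unfolding Q_def
  proof (rule lfp_Dtilde_infinite_subset_closed[OF mdp])
    fix s assume "s \<in> {s. lfp (Dtilde opt P T) s = \<infinity>}"
      and "attracts opt P {s. lfp (Dtilde opt P T) s = \<infinity>} (L N) s"
    then have "s \<in> step (L N)" by (simp add: step_def Q_def)
    with fixpoint show "s \<in> L N" by simp
  qed
  define rank where "rank s = (LEAST k. s \<in> L k)" for s
  show thesis
  proof (rule that)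
    fix s
    assume s: "s \<in> Q - T"
    then have "s \<in> L N" using Q_sub by blast
    then have "s \<in> L (rank s)" unfolding rank_def by (rule LeastI)
    moreover have "rank s \<noteq> 0" using calculation s by (metis DiffD2 L_def funpow_0)
    then obtain j where j: "rank s = Suc j" using not0_implies_Suc by blast
    moreover have "s \<notin> L j" using j unfolding rank_def by (metis lessI not_less_Least)
    ultimately have "attracts opt P Q (L j) s" by (simp add: L_def step_def)
    moreover have "L j \<subseteq> {s'. rank s' < rank s}"
      using j unfolding rank_def by (auto intro: Least_le simp: less_Suc_eq_le)
    ultimately show "attracts opt P Q {s'. rank s' < rank s} s"
      by (rule attracts_mono[rotated])
  qed
qed

lemma reach_prob_le_1:
  fixes P :: "'s::finite \<Rightarrow> 'a::finite \<Rightarrow> 's \<Rightarrow> real"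
  assumes "is_mdp P" and "is_strategy P \<tau>"
  shows "reach_prob P \<tau> T s \<le> 1"
  using until_prob_nonneg_le_1[OF assms] by (simp add: reach_prob_def)

lemma opt_reach_prob_Minimize_eq_1:
  fixes P :: "'s::finite \<Rightarrow> 'a::finite \<Rightarrow> 's \<Rightarrow> real"
  assumes mdp: "is_mdp P" and all_1: "\<And>\<tau>. is_strategy P \<tau> \<Longrightarrow> reach_prob P \<tau> T s = 1"
  shows "opt_reach_prob Minimize P T s = 1"
proof -
  have "is_strategy P (\<lambda>s. SOME a. a \<in> Act P s)"
    unfolding is_strategy_def using Act_nonempty[OF mdp] by (simp add: some_in_eq)
  then have "{\<tau>. is_strategy P \<tau>} \<noteq> {}" by blast
  moreover have "(INF \<tau>\<in>{\<tau>. is_strategy P \<tau>}. reach_prob P \<tau> T s) = (INF \<tau>\<in>{\<tau>. is_strategy P \<tau>}. 1)"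
    using all_1 by (intro INF_cong) auto
  ultimately show ?thesis by (simp add: opt_reach_prob_def)
qed

lemma opt_reach_prob_Maximize_eq_1:
  fixes P :: "'s::finite \<Rightarrow> 'a::finite \<Rightarrow> 's \<Rightarrow> real"
  assumes mdp: "is_mdp P" and strat: "is_strategy P \<tau>" and "reach_prob P \<tau> T s = 1"
  shows "opt_reach_prob Maximize P T s = 1"
proof -
  have "bdd_above ((\<lambda>\<tau>. reach_prob P \<tau> T s) ` {\<tau>. is_strategy P \<tau>})"
    using reach_prob_le_1[OF mdp] by (intro bdd_aboveI2[where M=1]) auto
  then have "1 \<le> (SUP \<tau>\<in>{\<tau>. is_strategy P \<tau>}. reach_prob P \<tau> T s)"
    using strat assms(3) by (intro cSUP_upper2) auto
  moreover have "(SUP \<tau>\<in>{\<tau>. is_strategy P \<tau>}. reach_prob P \<tau> T s) \<le> 1"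
    using strat reach_prob_le_1[OF mdp] by (intro cSUP_least) auto
  ultimately show ?thesis by (simp add: opt_reach_prob_def)
qed

lemma opt_reach_prob_eq_1_if_lfp_Dtilde_infinite:
  fixes P :: "'s::finite \<Rightarrow> 'a::finite \<Rightarrow> 's \<Rightarrow> real"
  assumes mdp: "is_mdp P" and infinite: "lfp (Dtilde opt P T) s = \<infinity>"
  shows "opt_reach_prob opt P T s = 1"
proof -
  define Q where "Q = {s. lfp (Dtilde opt P T) s = \<infinity>}"
  obtain rank :: "'s \<Rightarrow> nat"
    where rank: "\<And>s. s \<in> Q - T \<Longrightarrow> attracts opt P Q {s'. rank s' < rank s} s"
    using lfp_Dtilde_infinite_ranking[OF mdp, of opt T, folded Q_def] by blast
  define descends where "descends s a \<longleftrightarrow>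
    s \<in> Q - T \<longrightarrow> Post P s a \<subseteq> Q \<and> (\<exists>s'\<in>Post P s a. rank s' < rank s)" for s a
  have reach_1: "reach_prob P \<tau> T s = 1"
    if "is_strategy P \<tau>" and "\<And>s. descends s (\<tau> s)" for \<tau>
    by (rule reach_prob_eq_1_if_ranked[OF mdp that(1), where Q=Q and rank=rank])
      (use that(2) infinite in \<open>auto simp: Q_def descends_def\<close>)
  show ?thesis
  proof (cases opt)
    case Minimize
    have "descends s a" if "a \<in> Act P s" for s a
      using rank[of s] that Minimize by (simp add: descends_def attracts_def) blast
    then have "reach_prob P \<tau> T s = 1" if "is_strategy P \<tau>" for \<tau>
      using reach_1 that by (simp add: is_strategy_def)
    then show ?thesis using Minimize opt_reach_prob_Minimize_eq_1[OF mdp] by simp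
  next
    case Maximize
    define \<tau> where "\<tau> s = (SOME a. a \<in> Act P s \<and> descends s a)" for s
    have "\<tau> s \<in> Act P s \<and> descends s (\<tau> s)" for s
      unfolding \<tau>_def
      by (rule someI_ex)
        (use rank[of s] Act_nonempty[OF mdp, of s] Maximize in \<open>auto simp: descends_def attracts_def\<close>)
    then have "is_strategy P \<tau>" and "reach_prob P \<tau> T s = 1"
      using reach_1 by (auto simp: is_strategy_def)
    then show ?thesis using Maximize opt_reach_prob_Maximize_eq_1[OF mdp] by simp
  qed
qed

theorem lemma11:
  fixes P :: "'s::finite \<Rightarrow> 'a::finite \<Rightarrow> 's \<Rightarrow> real"
    and T :: "'s set"
    and opt :: optdir
    and \<sigma> :: "'s \<Rightarrow> 'a"
  assumes mdp: "is_mdp P"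
    and strat: "is_strategy P \<sigma>"
    and optimal: "\<forall>s. reach_prob P \<sigma> T s = opt_reach_prob opt P T s"
  shows "\<forall>s. until_prob P \<sigma> (- T) {s'. opt_reach_prob opt P T s' = 0} s > 0
           \<longrightarrow> lfp (Dtilde opt P T) s < \<infinity>"
proof (intro allI impI)
  fix s
  assume "until_prob P \<sigma> (- T) {s'. opt_reach_prob opt P T s' = 0} s > 0"
  moreover have "reach_prob P \<sigma> T s + until_prob P \<sigma> (- T) {s'. opt_reach_prob opt P T s' = 0} s \<le> 1"
    using optimal by (intro reach_prob_add_until_prob_le_1[OF mdp strat]) simp
  ultimately have "opt_reach_prob opt P T s \<noteq> 1" using optimal by auto
  then show "lfp (Dtilde opt P T) s < \<infinity>"
    using opt_reach_prob_eq_1_if_lfp_Dtilde_infinite[OF mdp] by (metis enat_ord_code(4) not_infinity_eq)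
qed

end
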